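(* Let $u \in \mathbb{R}^n_{\ge 0}$ and let $h : \mathbb{R}^n \to \mathbb{R}$ be a differentiable concave function with $h(0) > 0$. Let $Y = \{y \in [0,u] : h(y) = 0\}$ (for every $y \in Y$ one has $\nabla h(y)^{\mathsf T} y < 0$). Let $\beta : Y \to \mathbb{R}$ be such that $\beta(y) < 1$ for all $y \in Y$ and such that every $x \ge 0$ satisfying the disjunction \[ \bigvee_{y \in Y} \frac{\nabla h(y)^{\mathsf T} x}{\nabla h(y)^{\mathsf T} y} \ge 1 \qquad (\ast) \] (i.e., there exists $y \in Y$ with $\frac{\nabla h(y)^{\mathsf T} x}{\nabla h(y)^{\mathsf T} y} \ge 1$) also satisfies $\frac{\nabla h(y)^{\mathsf T} x}{\nabla h(y)^{\mathsf T} y} \ge \beta(y)$ for every $y \in Y$. Let $z : Y \to \mathbb{Z}$ be such that either $z \equiv 0$ or there exists $y_0 \in Y$ with $z(y_0) > 0$. Then every $x \ge 0$ satisfying $(\ast)$ also satisfies \[ \bigvee_{y \in Y} \frac{\nabla h(y)^{\mathsf T} x}{\nabla h(y)^{\mathsf T} y} + z(y)\,(1 - \beta(y)) \ge 1, \] i.e., there exists $y \in Y$ with $\frac{\nabla h(y)^{\mathsf T} x}{\nabla h(y)^{\mathsf T} y} + z(y)(1 - \beta(y)) \ge 1$.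
   Context: $[0,u] = \{x \in \mathbb{R}^n : 0 \le x_i \le u_i \text{ for all } i\}$. The function $\beta$ plays the role of lower bounds on each disjunctive term valid for all relevant points. *)

theory Defs
  imports "HOL-Analysis.Analysis"
begin

end

theory Submission
  imports Defs
begin

lemma add_int_mult_gap_ge_one:
  fixes t b :: real and k :: int
  assumes "t \<ge> b" and "b \<le> 1" and "k > 0"
  shows "t + of_int k * (1 - b) \<ge> 1"
proof -
  have "1 - b \<le> of_int k * (1 - b)"
    using mult_right_mono[of 1 "of_int k" "1 - b"] assms by simp
  with \<open>t \<ge> b\<close> show ?thesis
    by linarith
qed

lemma disjunction_shift_by_integer_gaps:
  fixes f \<beta> :: "'a \<Rightarrow> real" and z :: "'a \<Rightarrow> int"
  assumes disj: "\<exists>y\<in>Y. f y \<ge> 1"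
    and lower: "\<forall>y\<in>Y. f y \<ge> \<beta> y"
    and beta_le: "\<forall>y\<in>Y. \<beta> y \<le> 1"
    and z_cases: "(\<forall>y\<in>Y. z y = 0) \<or> (\<exists>y\<in>Y. z y > 0)"
  shows "\<exists>y\<in>Y. f y + of_int (z y) * (1 - \<beta> y) \<ge> 1"
  using z_cases
proof
  assume "\<forall>y\<in>Y. z y = 0"
  then show ?thesis
    using disj by auto
next
  assume "\<exists>y\<in>Y. z y > 0"
  then obtain y where "y \<in> Y" "z y > 0"
    by blast
  then show ?thesis
    using lower beta_le by (intro bexI[of _ y] add_int_mult_gap_ge_one) auto
qed

(* The hypotheses on u and h only describe the setting in which Y and the cut coefficients
   arise; the argument needs nothing beyond the validity of the lower bounds \<beta>. *)
theorem lemma1: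
  fixes u :: "real ^ 'n" and h :: "real ^ 'n \<Rightarrow> real"
    and gradh :: "real ^ 'n \<Rightarrow> real ^ 'n"
    and Y :: "(real ^ 'n) set"
    and \<beta> :: "real ^ 'n \<Rightarrow> real" and z :: "real ^ 'n \<Rightarrow> int"
  assumes u_nonneg: "\<forall>i. 0 \<le> u $ i"
    and grad: "\<forall>y. (h has_derivative (\<lambda>v. gradh y \<bullet> v)) (at y)"
    and concave: "concave_on UNIV h"
    and h0: "h 0 > 0"
    and Y_def: "Y = {y. (\<forall>i. 0 \<le> y $ i \<and> y $ i \<le> u $ i) \<and> h y = 0}"
    and beta_lt: "\<forall>y\<in>Y. \<beta> y < 1"
    and beta_valid: "\<forall>x. (\<forall>i. 0 \<le> x $ i) \<longrightarrow>
        (\<exists>y\<in>Y. (gradh y \<bullet> x) / (gradh y \<bullet> y) \<ge> 1) \<longrightarrow>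
        (\<forall>y\<in>Y. (gradh y \<bullet> x) / (gradh y \<bullet> y) \<ge> \<beta> y)"
    and z_cond: "(\<forall>y\<in>Y. z y = 0) \<or> (\<exists>y0\<in>Y. z y0 > 0)"
  shows "\<forall>x. (\<forall>i. 0 \<le> x $ i) \<longrightarrow>
        (\<exists>y\<in>Y. (gradh y \<bullet> x) / (gradh y \<bullet> y) \<ge> 1) \<longrightarrow>
        (\<exists>y\<in>Y. (gradh y \<bullet> x) / (gradh y \<bullet> y) + real_of_int (z y) * (1 - \<beta> y) \<ge> 1)"
proof (intro allI impI)
  fix x :: "real ^ 'n"
  assume "\<forall>i. 0 \<le> x $ i"
    and disj: "\<exists>y\<in>Y. (gradh y \<bullet> x) / (gradh y \<bullet> y) \<ge> 1"
  then have "\<forall>y\<in>Y. (gradh y \<bullet> x) / (gradh y \<bullet> y) \<ge> \<beta> y"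
    using beta_valid by blast
  moreover have "\<forall>y\<in>Y. \<beta> y \<le> 1"
    using beta_lt by fastforce
  ultimately show "\<exists>y\<in>Y. (gradh y \<bullet> x) / (gradh y \<bullet> y) + real_of_int (z y) * (1 - \<beta> y) \<ge> 1"
    using disjunction_shift_by_integer_gaps[OF disj _ _ z_cond] by blast
qed

end
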